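(* Let $f=\frac1n\sum_{z=1}^nf_z$ be twice differentiable, let $x_0\in\mathbb{R}^d$, $H=\nabla^2f(x_0)$, and suppose $\lambda_{\min}(H)=-\lambda<0$ with unit eigenvector $v$, and that the CNC condition holds at $x_0$: $\mathbb{E}_z[(v^T\nabla f_z(x_0))^2]\ge\tau$ for $z$ uniform on $[n]$. Let $x_1=x_0-r\nabla f_z(x_0)$ with $z$ uniform on $[n]$, let $\eta>0$, $\kappa=1+\eta\lambda$, and $u_t=(I-\eta H)^t(x_1-x_0)$. Then for every $t\ge0$, $$\mathbb{E}[\|u_t\|^2]\ge\tau r^2\kappa^{2t}.$$ *)

theory Defs
  imports "HOL-Analysis.Analysis"
begin

definition is_eigenvalue :: "real^'d^'d \<Rightarrow> real \<Rightarrow> bool" where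
  "is_eigenvalue A \<mu> \<longleftrightarrow> (\<exists>w. w \<noteq> 0 \<and> A *v w = \<mu> *\<^sub>R w)"

definition lambda_min_is :: "real^'d^'d \<Rightarrow> real \<Rightarrow> bool" where
  "lambda_min_is A m \<longleftrightarrow> is_eigenvalue A m \<and> (\<forall>\<mu>. is_eigenvalue A \<mu> \<longrightarrow> m \<le> \<mu>)"

fun matpow :: "real^'d^'d \<Rightarrow> nat \<Rightarrow> real^'d^'d" where
  "matpow A 0 = mat 1"
| "matpow A (Suc k) = A ** matpow A k"

end

theory Submission
  imports Defs
begin

text \<open>
  The Hessian \<open>H\<close> is symmetric, so the eigenvector \<open>v\<close> of \<open>H\<close> is also a left eigenvector of
  \<open>I - \<eta>H\<close> with eigenvalue \<open>\<kappa> = 1 + \<eta>\<lambda>\<close>. Hence \<open>v \<bullet> u\<^sub>t = -r \<kappa>\<^sup>t (v \<bullet> \<nabla>f\<^sub>z(x\<^sub>0))\<close>, and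
  \<open>\<parallel>u\<^sub>t\<parallel>\<^sup>2 \<ge> (v \<bullet> u\<^sub>t)\<^sup>2 = r\<^sup>2 \<kappa>\<^sup>2\<^sup>t (v \<bullet> \<nabla>f\<^sub>z(x\<^sub>0))\<^sup>2\<close> for every \<open>z\<close>; averaging over \<open>z\<close> and
  the CNC condition give the bound. Since \<open>f\<close> is only assumed twice differentiable (not
  \<open>C\<^sup>2\<close>), symmetry of \<open>H\<close> is proved directly: the symmetric second difference
  \<open>f(x\<^sub>0+sh+sk) - f(x\<^sub>0+sh) - f(x\<^sub>0+sk) + f(x\<^sub>0)\<close>, divided by \<open>s\<^sup>2\<close>, tends to \<open>h \<bullet> Hk\<close>.
\<close>

definition second_difference :: "('a::real_vector \<Rightarrow> real) \<Rightarrow> 'a \<Rightarrow> 'a \<Rightarrow> 'a \<Rightarrow> real" where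
  "second_difference F x a b = F (x + a + b) - F (x + a) - F (x + b) + F x"

lemma second_difference_commute: "second_difference F x a b = second_difference F x b a"
  by (simp add: second_difference_def algebra_simps)

lemma second_difference_mean_value:
  fixes F :: "'a::real_inner \<Rightarrow> real"
  assumes grad: "\<And>x. GDERIV F x :> g x"
  obtains \<theta> where "0 < \<theta>" "\<theta> < 1"
    and "second_difference F x a b = a \<bullet> (g (x + \<theta> *\<^sub>R a + b) - g (x + \<theta> *\<^sub>R a))"
proof -
  define \<phi> where "\<phi> \<theta> = F (x + \<theta> *\<^sub>R a + b) - F (x + \<theta> *\<^sub>R a)" for \<theta> :: real
  define \<phi>' where "\<phi>' \<theta> = a \<bullet> (g (x + \<theta> *\<^sub>R a + b) - g (x + \<theta> *\<^sub>R a))" for \<theta> :: real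
  have "(\<phi> has_real_derivative \<phi>' \<theta>) (at \<theta>)" for \<theta>
  proof -
    have line1: "((\<lambda>\<theta>. x + \<theta> *\<^sub>R a + b) has_derivative (\<lambda>d. d *\<^sub>R a)) (at \<theta>)"
      and line2: "((\<lambda>\<theta>. x + \<theta> *\<^sub>R a) has_derivative (\<lambda>d. d *\<^sub>R a)) (at \<theta>)"
      by (auto intro!: derivative_eq_intros)
    have dF: "(F has_derivative (\<lambda>h. h \<bullet> g y)) (at y)" for y
      using grad by (simp add: gderiv_def)
    have "(\<phi> has_derivative (\<lambda>d. d *\<^sub>R a \<bullet> g (x + \<theta> *\<^sub>R a + b) - d *\<^sub>R a \<bullet> g (x + \<theta> *\<^sub>R a))) (at \<theta>)"
      unfolding \<phi>_def
      using has_derivative_diff[OF has_derivative_compose[OF line1 dF] has_derivative_compose[OF line2 dF]]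
      by (simp add: o_def)
    then show ?thesis
      unfolding has_field_derivative_def
      by (rule has_derivative_eq_rhs) (simp add: \<phi>'_def fun_eq_iff inner_diff_right algebra_simps)
  qed
  then obtain \<theta> where "0 < \<theta>" "\<theta> < 1" "\<phi> 1 - \<phi> 0 = (1 - 0) * \<phi>' \<theta>"
    using MVT2[of 0 1 \<phi> \<phi>'] by auto
  then show ?thesis
    by (intro that[of \<theta>]) (auto simp: \<phi>_def \<phi>'_def second_difference_def)
qed

lemma second_difference_estimate:
  fixes F :: "'a::real_inner \<Rightarrow> real"
  assumes grad: "\<And>x. GDERIV F x :> g x"
    and "linear G" and "e \<ge> 0"
    and remainder: "\<And>y. norm y < d \<Longrightarrow> norm (g (x + y) - g x - G y) \<le> e * norm y"
    and small: "norm a + norm b < d"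
  shows "\<bar>second_difference F x a b - a \<bullet> G b\<bar> \<le> 2 * e * norm a * (norm a + norm b)"
proof -
  obtain \<theta> where \<theta>: "0 < \<theta>" "\<theta> < 1"
    and mvt: "second_difference F x a b = a \<bullet> (g (x + \<theta> *\<^sub>R a + b) - g (x + \<theta> *\<^sub>R a))"
    using second_difference_mean_value[OF grad] by blast
  define p where "p = \<theta> *\<^sub>R a"
  define R where "R y = g (x + y) - g x - G y" for y
  have R_bound: "norm (R y) \<le> e * (norm a + norm b)" if "norm y \<le> norm a + norm b" for y
  proof -
    have "norm (R y) \<le> e * norm y"
      using remainder[of y] that small by (simp add: R_def)
    also have "\<dots> \<le> e * (norm a + norm b)"
      using that \<open>e \<ge> 0\<close> by (rule mult_left_mono)
    finally show ?thesis .
  qed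
  have "norm p \<le> norm a"
    using \<theta> by (simp add: p_def mult_left_le_one_le)
  then have "norm p \<le> norm a + norm b" and "norm (p + b) \<le> norm a + norm b"
    using norm_triangle_ineq[of p b] norm_ge_zero[of b] by linarith+
  then have "norm (R (p + b) - R p) \<le> 2 * e * (norm a + norm b)"
    using R_bound[of p] R_bound[of "p + b"] norm_triangle_ineq4[of "R (p + b)" "R p"] by linarith
  then have "\<bar>a \<bullet> (R (p + b) - R p)\<bar> \<le> norm a * (2 * e * (norm a + norm b))"
    using Cauchy_Schwarz_ineq2[of a "R (p + b) - R p"] mult_left_mono[OF _ norm_ge_zero[of a]]
    by (meson order_trans)
  moreover have "g (x + p + b) - g (x + p) = G b + (R (p + b) - R p)"
    using linear_add[OF \<open>linear G\<close>, of p b] by (simp add: R_def algebra_simps)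
  ultimately show ?thesis
    using mvt by (simp add: p_def inner_add_right mult.assoc mult.left_commute)
qed

lemma second_difference_tendsto:
  fixes F :: "'a::real_inner \<Rightarrow> real"
  assumes grad: "\<And>x. GDERIV F x :> g x"
    and hess: "(g has_derivative G) (at x)"
  shows "((\<lambda>s. second_difference F x (s *\<^sub>R h) (s *\<^sub>R k) / s\<^sup>2) \<longlongrightarrow> h \<bullet> G k) (at_right 0)"
proof (rule tendstoI)
  fix \<epsilon> :: real
  assume "\<epsilon> > 0"
  define C where "C = 2 * norm h * (norm h + norm k)"
  define e where "e = \<epsilon> / (C + 1)"
  have "C \<ge> 0" by (simp add: C_def)
  then have "e > 0" and "e * C < \<epsilon>"
    using \<open>\<epsilon> > 0\<close> by (auto simp: e_def field_simps)
  have "linear G"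
    using hess has_derivative_linear by blast
  obtain d where "d > 0" and d: "\<And>y. norm (y - x) < d \<Longrightarrow> norm (g y - g x - G (y - x)) \<le> e * norm (y - x)"
    using hess \<open>e > 0\<close> unfolding has_derivative_at_alt by blast
  have remainder: "norm y < d \<Longrightarrow> norm (g (x + y) - g x - G y) \<le> e * norm y" for y
    using d[of "x + y"] by simp
  define Q where "Q s = second_difference F x (s *\<^sub>R h) (s *\<^sub>R k)" for s :: real
  have bound: "\<bar>Q s / s\<^sup>2 - h \<bullet> G k\<bar> < \<epsilon>" if "s > 0" "s * (norm h + norm k) < d" for s :: real
  proof -
    have "\<bar>Q s - s\<^sup>2 * (h \<bullet> G k)\<bar> \<le> s\<^sup>2 * (e * C)"
      using second_difference_estimate[OF grad \<open>linear G\<close> _ remainder, where a = "s *\<^sub>R h" and b = "s *\<^sub>R k"] that \<open>e > 0\<close>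
      by (simp add: Q_def second_difference_def linear_scale[OF \<open>linear G\<close>] C_def power2_eq_square algebra_simps)
    then have "\<bar>Q s / s\<^sup>2 - h \<bullet> G k\<bar> \<le> e * C"
      using \<open>s > 0\<close> by (simp add: field_simps)
    then show ?thesis
      using \<open>e * C < \<epsilon>\<close> by simp
  qed
  have "((\<lambda>s. s * (norm h + norm k)) \<longlongrightarrow> 0) (at_right 0)"
    by (auto intro!: tendsto_eq_intros)
  then have "\<forall>\<^sub>F s in at_right 0. s * (norm h + norm k) < d"
    using \<open>d > 0\<close> by (rule order_tendstoD(2))
  then have "\<forall>\<^sub>F s in at_right 0. \<bar>Q s / s\<^sup>2 - h \<bullet> G k\<bar> < \<epsilon>"
    using eventually_at_right_less[of 0] by eventually_elim (use bound in auto)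
  then show "\<forall>\<^sub>F s in at_right 0. dist (second_difference F x (s *\<^sub>R h) (s *\<^sub>R k) / s\<^sup>2) (h \<bullet> G k) < \<epsilon>"
    by (simp add: Q_def dist_real_def)
qed

lemma gradient_derivative_symmetric:
  fixes F :: "'a::real_inner \<Rightarrow> real"
  assumes grad: "\<And>x. GDERIV F x :> g x"
    and hess: "(g has_derivative G) (at x)"
  shows "h \<bullet> G k = k \<bullet> G h"
proof -
  have "((\<lambda>s. second_difference F x (s *\<^sub>R h) (s *\<^sub>R k) / s\<^sup>2) \<longlongrightarrow> h \<bullet> G k) (at_right 0)"
    by (rule second_difference_tendsto[OF grad hess])
  moreover have "((\<lambda>s. second_difference F x (s *\<^sub>R h) (s *\<^sub>R k) / s\<^sup>2) \<longlongrightarrow> k \<bullet> G h) (at_right 0)"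
    using second_difference_tendsto[OF grad hess, of k h] by (simp add: second_difference_commute)
  ultimately show ?thesis
    using tendsto_unique trivial_limit_at_right_real by blast
qed

lemma inner_matpow_left_eigenvector:
  fixes A :: "real^'n^'n"
  assumes "\<And>u. v \<bullet> (A *v u) = \<mu> * (v \<bullet> u)"
  shows "v \<bullet> (matpow A k *v u) = \<mu> ^ k * (v \<bullet> u)"
proof (induction k)
  case 0
  then show ?case by simp
next
  case (Suc k)
  have "v \<bullet> (matpow A (Suc k) *v u) = v \<bullet> (A *v (matpow A k *v u))"
    by (simp add: matrix_vector_mul_assoc)
  then show ?case
    using assms Suc.IH by simp
qed

lemma inner_square_le_norm_square:
  fixes v u :: "'a::real_inner"
  assumes "norm v = 1"
  shows "(v \<bullet> u)\<^sup>2 \<le> (norm u)\<^sup>2"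
proof -
  have "\<bar>v \<bullet> u\<bar> \<le> norm u"
    using Cauchy_Schwarz_ineq2[of v u] assms by simp
  then show ?thesis
    by (metis abs_ge_zero power2_abs power_mono)
qed

theorem lemma30:
  fixes fs :: "nat \<Rightarrow> real^'d \<Rightarrow> real"
    and gs :: "nat \<Rightarrow> real^'d \<Rightarrow> real^'d"
    and gF :: "real^'d \<Rightarrow> real^'d"
    and H :: "real^'d^'d"
    and n :: nat and x0 v :: "real^'d"
    and lam \<tau> r \<eta> :: real and t :: nat
  assumes n_pos: "n \<ge> 1"
    and grad_fs: "\<And>z x. z < n \<Longrightarrow> GDERIV (fs z) x :> gs z x"
    and grad_F: "\<And>x. GDERIV (\<lambda>y. (1 / real n) * (\<Sum>z<n. fs z y)) x :> gF x"
    and twice_diff: "\<And>x. gF differentiable (at x)"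
    and hess: "(gF has_derivative (\<lambda>h. H *v h)) (at x0)"
    and lam_pos: "lam > 0"
    and lam_min: "lambda_min_is H (- lam)"
    and v_unit: "norm v = 1"
    and v_eig: "H *v v = (- lam) *\<^sub>R v"
    and CNC: "(1 / real n) * (\<Sum>z<n. (v \<bullet> gs z x0)^2) \<ge> \<tau>"
    and eta_pos: "\<eta> > 0"
  shows "(1 / real n) * (\<Sum>z<n.
            (norm (matpow (mat 1 - \<eta> *\<^sub>R H) t *v ((x0 - r *\<^sub>R gs z x0) - x0)))^2)
         \<ge> \<tau> * r^2 * (1 + \<eta> * lam) ^ (2 * t)"
proof -
  \<comment> \<open>Only the eigen-equation of \<open>v\<close> enters.\<close>
  let ?\<kappa> = "1 + \<eta> * lam"
  let ?M = "mat 1 - \<eta> *\<^sub>R H"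
  have "v \<bullet> (H *v u) = - lam * (v \<bullet> u)" for u
    using gradient_derivative_symmetric[OF grad_F hess, of v u] v_eig by (simp add: inner_commute)
  then have "v \<bullet> (?M *v u) = ?\<kappa> * (v \<bullet> u)" for u
    by (simp add: matrix_vector_mult_diff_rdistrib flip: scaleR_matrix_vector_assoc)
      (simp add: inner_diff_right algebra_simps)
  then have v_power: "v \<bullet> (matpow ?M t *v u) = ?\<kappa> ^ t * (v \<bullet> u)" for u
    by (rule inner_matpow_left_eigenvector)
  have termwise: "?\<kappa> ^ (2 * t) * r\<^sup>2 * (v \<bullet> gs z x0)\<^sup>2
      \<le> (norm (matpow ?M t *v ((x0 - r *\<^sub>R gs z x0) - x0)))\<^sup>2" for z
  proof -
    have "?\<kappa> ^ (2 * t) * r\<^sup>2 * (v \<bullet> gs z x0)\<^sup>2 = (v \<bullet> (matpow ?M t *v ((x0 - r *\<^sub>R gs z x0) - x0)))\<^sup>2"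
      by (simp add: v_power power_mult_distrib power_mult algebra_simps)
    also have "\<dots> \<le> (norm (matpow ?M t *v ((x0 - r *\<^sub>R gs z x0) - x0)))\<^sup>2"
      using v_unit by (rule inner_square_le_norm_square)
    finally show ?thesis .
  qed
  have "\<tau> * r\<^sup>2 * ?\<kappa> ^ (2 * t) = ?\<kappa> ^ (2 * t) * r\<^sup>2 * \<tau>"
    by (simp add: algebra_simps)
  also have "\<dots> \<le> ?\<kappa> ^ (2 * t) * r\<^sup>2 * ((1 / real n) * (\<Sum>z<n. (v \<bullet> gs z x0)\<^sup>2))"
    using CNC by (rule mult_left_mono) (simp add: power_mult)
  also have "\<dots> = (1 / real n) * (\<Sum>z<n. ?\<kappa> ^ (2 * t) * r\<^sup>2 * (v \<bullet> gs z x0)\<^sup>2)"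
    by (simp add: sum_distrib_left algebra_simps)
  also have "\<dots> \<le> (1 / real n) * (\<Sum>z<n. (norm (matpow ?M t *v ((x0 - r *\<^sub>R gs z x0) - x0)))\<^sup>2)"
    by (intro mult_left_mono sum_mono termwise) simp
  finally show ?thesis .
qed

end
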